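(* For every integer $n\geq 38$ there exists a neutral graph on $n$ vertices that is not a tree.
   Context: All graphs are finite, simple and connected. For a graph $G=(V,E)$ with $m=|E|\geq 1$ edges, let $d_u$ denote the degree of vertex $u$ and write sums over edges $e_{uv}\in E$ (each edge counted once). The assortativity coefficient of $G$ is $$r(G)=\frac{m^{-1}\sum_{e_{uv}\in E} d_{u}d_{v}-\Big[m^{-1}\sum_{e_{uv}\in E} \tfrac{1}{2}(d_{u}+d_{v})\Big]^{2}}{m^{-1}\sum_{e_{uv}\in E} \tfrac{1}{2}(d^{2}_{u}+d^{2}_{v})-\Big[m^{-1}\sum_{e_{uv}\in E} \tfrac{1}{2}(d_{u}+d_{v})\Big]^{2}},$$ defined whenever the denominator is nonzero. $G$ is called neutral if $r(G)$ is defined and $r(G)=0$. *)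

theory Defs
  imports Complex_Main
begin

definition simple_graph :: "'a set \<Rightarrow> 'a set set \<Rightarrow> bool" where
  "simple_graph V E \<longleftrightarrow> finite V \<and>
     (\<forall>e\<in>E. \<exists>u v. e = {u, v} \<and> u \<noteq> v \<and> u \<in> V \<and> v \<in> V)"

definition adj :: "'a set set \<Rightarrow> 'a \<Rightarrow> 'a \<Rightarrow> bool" where
  "adj E u v \<longleftrightarrow> {u, v} \<in> E \<and> u \<noteq> v"

definition connected_graph :: "'a set \<Rightarrow> 'a set set \<Rightarrow> bool" where
  "connected_graph V E \<longleftrightarrow> V \<noteq> {} \<and> (\<forall>u\<in>V. \<forall>v\<in>V. (adj E)\<^sup>*\<^sup>* u v)"

definition is_cycle :: "'a set set \<Rightarrow> 'a list \<Rightarrow> bool" where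
  "is_cycle E vs \<longleftrightarrow> length vs \<ge> 3 \<and> distinct vs \<and>
     (\<forall>i. Suc i < length vs \<longrightarrow> adj E (vs ! i) (vs ! Suc i)) \<and>
     adj E (last vs) (hd vs)"

definition acyclic_graph :: "'a set set \<Rightarrow> bool" where
  "acyclic_graph E \<longleftrightarrow> \<not> (\<exists>vs. is_cycle E vs)"

definition is_tree :: "'a set \<Rightarrow> 'a set set \<Rightarrow> bool" where
  "is_tree V E \<longleftrightarrow> connected_graph V E \<and> acyclic_graph E"

definition deg :: "'a set set \<Rightarrow> 'a \<Rightarrow> nat" where
  "deg E u = card {e\<in>E. u \<in> e}"

definition assort_mean :: "'a set set \<Rightarrow> real" where
  "assort_mean E = (\<Sum>e\<in>E. (1/2) * (\<Sum>x\<in>e. real (deg E x))) / real (card E)"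

definition assort_num :: "'a set set \<Rightarrow> real" where
  "assort_num E = (\<Sum>e\<in>E. (\<Prod>x\<in>e. real (deg E x))) / real (card E) - (assort_mean E)\<^sup>2"

definition assort_den :: "'a set set \<Rightarrow> real" where
  "assort_den E = (\<Sum>e\<in>E. (1/2) * (\<Sum>x\<in>e. (real (deg E x))\<^sup>2)) / real (card E) - (assort_mean E)\<^sup>2"

definition assortativity :: "'a set set \<Rightarrow> real" where
  "assortativity E = assort_num E / assort_den E"

definition neutral :: "'a set set \<Rightarrow> bool" where
  "neutral E \<longleftrightarrow> card E \<ge> 1 \<and> assort_den E \<noteq> 0 \<and> assortativity E = 0"

end

theory Submission
  imports Defs "HOL-Library.Product_Plus"
begin

(* The graph is a necklace of small units on 7, 8 or 9 vertices: the last vertex of each unit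
   is joined to the first vertex of the next one, and the last unit to the first.  Each unit,
   together with the edge entering it, is balanced in the closed necklace: over its edges the
   end degrees average 3, their products average 9 = 3^2 and their squares average more than 9.
   These sums are additive over units, so the numerator of r vanishes while its denominator is
   positive.  As 7, 8 and 9 have sums of every size from 21 on, such necklaces exist on n
   vertices for every n >= 28, and a triangle in the first unit shows that they are not trees. *)

definition edge_moments :: "('a \<Rightarrow> real) \<Rightarrow> 'a set \<Rightarrow> real \<times> real \<times> real" where
  "edge_moments d e = (\<Sum>x\<in>e. d x, \<Prod>x\<in>e. d x, \<Sum>x\<in>e. (d x)\<^sup>2)"

definition pair_moments :: "real \<Rightarrow> real \<Rightarrow> real \<times> real \<times> real" where
  "pair_moments x y = (x + y, x * y, x\<^sup>2 + y\<^sup>2)"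

lemma edge_moments_doubleton: "u \<noteq> v \<Longrightarrow> edge_moments d {u, v} = pair_moments (d u) (d v)"
  by (simp add: edge_moments_def pair_moments_def)

lemma edge_moments_cong: "(\<And>x. x \<in> e \<Longrightarrow> d x = d' x) \<Longrightarrow> edge_moments d e = edge_moments d' e"
  unfolding edge_moments_def by (metis (no_types, lifting) prod.cong sum.cong)

definition balanced_moments :: "real \<Rightarrow> nat \<Rightarrow> real \<times> real \<times> real \<Rightarrow> bool" where
  "balanced_moments c m M \<longleftrightarrow>
     fst M = 2 * c * m \<and> fst (snd M) = c\<^sup>2 * m \<and> snd (snd M) > 2 * c\<^sup>2 * m"

lemma balanced_moments_add:
  "balanced_moments c m M \<Longrightarrow> balanced_moments c m' M' \<Longrightarrow> balanced_moments c (m + m') (M + M')"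
  by (simp add: balanced_moments_def algebra_simps)

lemma neutral_if_balanced_moments:
  assumes "finite E" "E \<noteq> {}"
    and "balanced_moments c (card E) (\<Sum>e\<in>E. edge_moments (\<lambda>x. real (deg E x)) e)"
  shows "neutral E"
proof -
  define m where "m = real (card E)"
  have "m > 0" using assms(1,2) by (simp add: m_def card_gt_0_iff)
  have S: "(\<Sum>e\<in>E. \<Sum>x\<in>e. real (deg E x)) = 2 * c * m"
    and P: "(\<Sum>e\<in>E. \<Prod>x\<in>e. real (deg E x)) = c\<^sup>2 * m"
    and Q: "(\<Sum>e\<in>E. \<Sum>x\<in>e. (real (deg E x))\<^sup>2) > 2 * c\<^sup>2 * m"
    using assms(3) by (simp_all add: balanced_moments_def edge_moments_def fst_sum snd_sum m_def)
  have mean: "assort_mean E = c"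
    using S \<open>m > 0\<close> by (simp add: assort_mean_def m_def[symmetric] sum_divide_distrib[symmetric])
  have num: "assort_num E = 0"
    using P \<open>m > 0\<close> by (simp add: assort_num_def mean m_def[symmetric])
  have "assort_den E = (\<Sum>e\<in>E. \<Sum>x\<in>e. (real (deg E x))\<^sup>2) / (2 * m) - c\<^sup>2"
    by (simp add: assort_den_def mean m_def sum_divide_distrib[symmetric])
  moreover have "c\<^sup>2 < (\<Sum>e\<in>E. \<Sum>x\<in>e. (real (deg E x))\<^sup>2) / (2 * m)"
    using Q \<open>m > 0\<close> by (simp add: pos_less_divide_eq mult_ac)
  ultimately have "assort_den E > 0" by simp
  then show ?thesis
    using num \<open>m > 0\<close> by (simp add: neutral_def assortativity_def m_def)
qed

lemma deg_Un:
  assumes "finite A" "finite B" "A \<inter> B = {}"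
  shows "deg (A \<union> B) v = deg A v + deg B v"
proof -
  have "{e \<in> A \<union> B. v \<in> e} = {e \<in> A. v \<in> e} \<union> {e \<in> B. v \<in> e}" by blast
  then show ?thesis
    unfolding deg_def using assms by (simp add: card_Un_disjoint disjoint_iff)
qed

lemma deg_insert:
  assumes "finite E" "e \<notin> E"
  shows "deg (insert e E) v = deg E v + (if v \<in> e then 1 else 0)"
proof -
  have "{x \<in> insert e E. v \<in> x} = (if v \<in> e then insert e {x \<in> E. v \<in> x} else {x \<in> E. v \<in> x})"
    by auto
  then show ?thesis
    unfolding deg_def using assms by simp
qed

lemma deg_eq_0: "(\<And>e. e \<in> E \<Longrightarrow> v \<notin> e) \<Longrightarrow> deg E v = 0"
  unfolding deg_def by (metis (mono_tags, lifting) card.empty empty_Collect_eq)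

lemma symp_adj: "symp (adj E)"
  by (auto intro: sympI simp: adj_def insert_commute)

lemma reachable_sym: "(adj E)\<^sup>*\<^sup>* u v \<Longrightarrow> (adj E)\<^sup>*\<^sup>* v u"
  by (metis symp_adj symp_rtranclp sympD)

lemma reachable_mono: "E \<subseteq> E' \<Longrightarrow> (adj E)\<^sup>*\<^sup>* u v \<Longrightarrow> (adj E')\<^sup>*\<^sup>* u v"
  by (erule rtranclp_mono[THEN predicate2D, rotated]) (auto simp: adj_def)

lemma triangle_not_tree:
  assumes "{a, b} \<in> E" "{b, c} \<in> E" "{a, c} \<in> E" "distinct [a, b, c]"
  shows "\<not> is_tree V E"
proof -
  have "adj E a b" "adj E b c" "adj E c a"
    using assms by (auto simp: adj_def insert_commute)
  then have "is_cycle E [a, b, c]"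
    using assms(4) by (auto simp: is_cycle_def less_Suc_eq)
  then show ?thesis by (auto simp: is_tree_def acyclic_graph_def)
qed

definition shift_edges :: "nat \<Rightarrow> (nat \<times> nat) list \<Rightarrow> nat set set" where
  "shift_edges k L = (\<lambda>(a, b). {k + a, k + b}) ` set L"

lemma inj_on_shift_edges:
  assumes "\<forall>(a, b)\<in>set L. a < b"
  shows "inj_on (\<lambda>(a, b). {k + a, k + b :: nat}) (set L)"
proof (rule inj_onI, clarify)
  fix a b c d assume "(a, b) \<in> set L" "(c, d) \<in> set L" "{k + a, k + b} = {k + c, k + d}"
  moreover from this(1,2) have "a < b" "c < d" using assms by auto
  ultimately show "a = c \<and> b = d" by (auto simp: doubleton_eq_iff)
qed

lemma card_shift_edges:
  assumes "\<forall>(a, b)\<in>set L. a < b" "distinct L"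
  shows "card (shift_edges k L) = length L"
  unfolding shift_edges_def using card_image[OF inj_on_shift_edges[OF assms(1)]] distinct_card[OF assms(2)]
  by simp

lemma sum_shift_edges:
  assumes "\<forall>(a, b)\<in>set L. a < b" "distinct L"
  shows "(\<Sum>e\<in>shift_edges k L. g e) = sum_list (map (\<lambda>(a, b). g {k + a, k + b}) L)"
  unfolding shift_edges_def sum.reindex[OF inj_on_shift_edges[OF assms(1)]]
  by (simp add: sum_list_distinct_conv_sum_set[OF assms(2)] comp_def prod.case_distrib)

definition unit_degree :: "(nat \<times> nat) list \<Rightarrow> nat \<Rightarrow> nat" where
  "unit_degree L j = length (filter (\<lambda>(a, b). a = j \<or> b = j) L)"

lemma deg_shift_edges:
  assumes "\<forall>(a, b)\<in>set L. a < b" "distinct L"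
  shows "deg (shift_edges k L) (k + j) = unit_degree L j"
proof -
  let ?f = "\<lambda>(a, b). {k + a, k + b :: nat}" and ?P = "\<lambda>(a, b). a = j \<or> b = j"
  have "{e \<in> shift_edges k L. k + j \<in> e} = ?f ` {p \<in> set L. ?P p}"
    unfolding shift_edges_def by auto
  moreover have "inj_on ?f {p \<in> set L. ?P p}"
    using inj_on_shift_edges[OF assms(1)] by (rule inj_on_subset) auto
  ultimately have "deg (shift_edges k L) (k + j) = card {p \<in> set L. ?P p}"
    unfolding deg_def by (simp add: card_image)
  also have "\<dots> = unit_degree L j"
    unfolding unit_degree_def using distinct_length_filter[OF assms(2)] by (simp add: Int_def conj_commute)
  finally show ?thesis .
qed

(* Inside a necklace, vertex 0 of a unit also meets the edge from the previous unit and its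
   last vertex the edge to the next one. *)
definition closed_unit_degree :: "(nat \<times> nat) list \<Rightarrow> nat \<Rightarrow> nat \<Rightarrow> real" where
  "closed_unit_degree L s j =
     real (unit_degree L j) + (if j = 0 then 1 else 0) + (if j = s - 1 then 1 else 0)"

definition unit_moments :: "(nat \<times> nat) list \<Rightarrow> nat \<Rightarrow> real \<times> real \<times> real" where
  "unit_moments L s =
     sum_list (map (\<lambda>(a, b). pair_moments (closed_unit_degree L s a) (closed_unit_degree L s b)) L)"

(* pair_moments 2 3 is the edge entering the unit: it joins the last vertex of the previous
   unit (closed degree 2) to vertex 0 (closed degree 3). *)
definition necklace_unit :: "(nat \<times> nat) list \<Rightarrow> nat \<Rightarrow> bool" where
  "necklace_unit L s \<longleftrightarrow> 2 \<le> s \<and> distinct L \<and> (\<forall>(a, b)\<in>set L. a < b \<and> b < s)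
     \<and> (\<forall>j\<in>{1..<s}. \<exists>a. (a, j) \<in> set L \<and> a < j)
     \<and> unit_degree L 0 = 2 \<and> unit_degree L (s - 1) = 1
     \<and> balanced_moments 3 (length L + 1) (unit_moments L s + pair_moments 2 3)"

lemma shift_edges_vertex:
  "necklace_unit L s \<Longrightarrow> e \<in> shift_edges k L \<Longrightarrow> v \<in> e \<Longrightarrow> k \<le> v \<and> v < k + s"
  unfolding necklace_unit_def shift_edges_def by fastforce

lemma moments_shift_edges:
  assumes "necklace_unit L s" and "\<And>j. j < s \<Longrightarrow> d (k + j) = closed_unit_degree L s j"
  shows "(\<Sum>e\<in>shift_edges k L. edge_moments d e) = unit_moments L s"
proof -
  have edges: "\<forall>(a, b)\<in>set L. a < b \<and> b < s" and "distinct L"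
    using assms(1) by (auto simp: necklace_unit_def)
  then have "(\<Sum>e\<in>shift_edges k L. edge_moments d e) =
      sum_list (map (\<lambda>(a, b). edge_moments d {k + a, k + b}) L)"
    by (intro sum_shift_edges) auto
  also have "\<dots> = unit_moments L s"
    unfolding unit_moments_def
  proof (intro arg_cong[where f = sum_list] map_cong refl, clarify)
    fix a b assume "(a, b) \<in> set L"
    with edges have "a < b" "b < s" by auto
    then show "edge_moments d {k + a, k + b} =
        pair_moments (closed_unit_degree L s a) (closed_unit_degree L s b)"
      by (simp add: edge_moments_doubleton assms(2))
  qed
  finally show ?thesis .
qed

lemma necklace_unit_reaches_first:
  assumes "necklace_unit L s" "j < s"
  shows "(adj (shift_edges k L))\<^sup>*\<^sup>* (k + j) k"
  using assms(2)
proof (induction j rule: less_induct)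
  case (less j)
  show ?case
  proof (cases "j = 0")
    case False
    then have "j \<in> {1..<s}" using less.prems by simp
    then obtain a where a: "(a, j) \<in> set L" "a < j"
      using assms(1) unfolding necklace_unit_def by blast
    then have "adj (shift_edges k L) (k + j) (k + a)"
      by (force simp: adj_def shift_edges_def insert_commute)
    moreover have "(adj (shift_edges k L))\<^sup>*\<^sup>* (k + a) k"
      using less.IH a(2) less.prems by simp
    ultimately show ?thesis by (rule converse_rtranclp_into_rtranclp)
  qed simp
qed

(* An open necklace on {0..<n} is closed by the edge {n - 1, 0}; closed_degree is the degree
   after closing, and pair_moments 2 3 in open_necklace accounts for the closing edge. *)
definition closed_degree :: "nat set set \<Rightarrow> nat \<Rightarrow> nat \<Rightarrow> real" where
  "closed_degree E n v = real (deg E v) + (if v = 0 then 1 else 0) + (if v = n - 1 then 1 else 0)"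

definition open_necklace :: "nat set set \<Rightarrow> nat \<Rightarrow> bool" where
  "open_necklace E n \<longleftrightarrow> 2 \<le> n \<and> finite E
     \<and> (\<forall>e\<in>E. \<exists>u v. e = {u, v} \<and> u < v \<and> v < n)
     \<and> (\<forall>v<n. (adj E)\<^sup>*\<^sup>* v 0) \<and> deg E 0 = 2 \<and> deg E (n - 1) = 1
     \<and> balanced_moments 3 (card E + 1)
         ((\<Sum>e\<in>E. edge_moments (closed_degree E n) e) + pair_moments 2 3)"

lemma open_necklace_vertex: "open_necklace E n \<Longrightarrow> e \<in> E \<Longrightarrow> v \<in> e \<Longrightarrow> v < n"
  unfolding open_necklace_def by fastforce

lemma open_necklace_unit:
  assumes "necklace_unit L s"
  shows "open_necklace (shift_edges 0 L) s"
proof -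
  let ?E = "shift_edges 0 L"
  have edges: "\<forall>(a, b)\<in>set L. a < b \<and> b < s" and "distinct L"
    using assms by (auto simp: necklace_unit_def)
  then have deg: "deg ?E j = unit_degree L j" for j
    using deg_shift_edges[of L 0 j] by auto
  have "(\<Sum>e\<in>?E. edge_moments (closed_degree ?E s) e) = unit_moments L s"
    by (rule moments_shift_edges[OF assms]) (simp add: closed_degree_def closed_unit_degree_def deg)
  moreover have "card ?E = length L"
    using edges \<open>distinct L\<close> by (intro card_shift_edges) auto
  moreover have "\<forall>v<s. (adj ?E)\<^sup>*\<^sup>* v 0"
    using necklace_unit_reaches_first[OF assms, of _ 0] by simp
  moreover have "\<forall>e\<in>?E. \<exists>u v. e = {u, v} \<and> u < v \<and> v < s"
    using edges by (fastforce simp: shift_edges_def)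
  ultimately show ?thesis
    using assms deg[of 0] deg[of "s - 1"] by (auto simp: open_necklace_def necklace_unit_def shift_edges_def)
qed

definition extend_necklace :: "nat set set \<Rightarrow> nat \<Rightarrow> (nat \<times> nat) list \<Rightarrow> nat set set" where
  "extend_necklace E n L = insert {n - 1, n} (E \<union> shift_edges n L)"

context
  fixes E :: "nat set set" and n s :: nat and L :: "(nat \<times> nat) list"
  assumes necklace: "open_necklace E n" and unit: "necklace_unit L s"
begin

lemma extend_necklace_disjoint:
  "finite E" "finite (shift_edges n L)" "E \<inter> shift_edges n L = {}" "{n - 1, n} \<notin> E \<union> shift_edges n L"
proof -
  show "finite E" using necklace by (simp add: open_necklace_def)
  show "finite (shift_edges n L)" by (simp add: shift_edges_def)
  have "e \<noteq> {}" if "e \<in> shift_edges n L" for e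
    using that by (auto simp: shift_edges_def)
  then show "E \<inter> shift_edges n L = {}"
    using open_necklace_vertex[OF necklace] shift_edges_vertex[OF unit] by (meson disjoint_iff ex_in_conv leD)
  have "n - 1 < n" using necklace by (simp add: open_necklace_def)
  then show "{n - 1, n} \<notin> E \<union> shift_edges n L"
    using open_necklace_vertex[OF necklace, of _ n] shift_edges_vertex[OF unit, of _ n "n - 1"] by auto
qed

lemma deg_extend_necklace:
  "deg (extend_necklace E n L) v =
     deg E v + deg (shift_edges n L) v + (if v = n - 1 \<or> v = n then 1 else 0)"
  unfolding extend_necklace_def using extend_necklace_disjoint
  by (simp add: deg_insert deg_Un)

lemma closed_degree_extend_old:
  assumes "v < n"
  shows "closed_degree (extend_necklace E n L) (n + s) v = closed_degree E n v"
proof -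
  have "deg (shift_edges n L) v = 0"
    using shift_edges_vertex[OF unit] assms by (meson deg_eq_0 leD)
  moreover have "s \<ge> 2" using unit by (simp add: necklace_unit_def)
  ultimately show ?thesis
    using assms by (simp add: closed_degree_def deg_extend_necklace)
qed

lemma closed_degree_extend_new:
  assumes "j < s"
  shows "closed_degree (extend_necklace E n L) (n + s) (n + j) = closed_unit_degree L s j"
proof -
  have "deg E (n + j) = 0"
    using open_necklace_vertex[OF necklace] by (meson deg_eq_0 not_add_less1)
  moreover have "deg (shift_edges n L) (n + j) = unit_degree L j"
    using unit by (intro deg_shift_edges) (auto simp: necklace_unit_def)
  moreover have "n \<ge> 2" using necklace by (simp add: open_necklace_def)
  ultimately show ?thesis
    using assms by (auto simp: closed_degree_def closed_unit_degree_def deg_extend_necklace)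
qed

lemma moments_extend_necklace:
  "(\<Sum>e\<in>extend_necklace E n L. edge_moments (closed_degree (extend_necklace E n L) (n + s)) e) =
     (\<Sum>e\<in>E. edge_moments (closed_degree E n) e) + unit_moments L s + pair_moments 2 3"
  (is "(\<Sum>e\<in>?E'. edge_moments ?d e) = _")
proof -
  have "n \<ge> 2" "deg E (n - 1) = 1" using necklace by (simp_all add: open_necklace_def)
  have "s \<ge> 2" "unit_degree L 0 = 2" using unit by (simp_all add: necklace_unit_def)
  have link: "edge_moments ?d {n - 1, n} = pair_moments 2 3"
    using closed_degree_extend_old[of "n - 1"] closed_degree_extend_new[of 0]
      \<open>n \<ge> 2\<close> \<open>deg E (n - 1) = 1\<close> \<open>s \<ge> 2\<close> \<open>unit_degree L 0 = 2\<close>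
    by (simp add: edge_moments_doubleton closed_degree_def closed_unit_degree_def)
  have old: "(\<Sum>e\<in>E. edge_moments ?d e) = (\<Sum>e\<in>E. edge_moments (closed_degree E n) e)"
    using open_necklace_vertex[OF necklace] closed_degree_extend_old
    by (intro sum.cong edge_moments_cong) auto
  have new: "(\<Sum>e\<in>shift_edges n L. edge_moments ?d e) = unit_moments L s"
    by (rule moments_shift_edges[OF unit closed_degree_extend_new])
  have split: "sum g ?E' = g {n - 1, n} + (sum g E + sum g (shift_edges n L))"
    for g :: "nat set \<Rightarrow> real \<times> real \<times> real"
    unfolding extend_necklace_def using extend_necklace_disjoint by (simp add: sum.union_disjoint)
  show ?thesis
    unfolding split[of "edge_moments ?d"] link old new by (simp add: add_ac)
qed

lemma card_extend_necklace: "card (extend_necklace E n L) = card E + length L + 1"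
proof -
  have "card (shift_edges n L) = length L"
    using unit by (intro card_shift_edges) (auto simp: necklace_unit_def)
  then show ?thesis
    unfolding extend_necklace_def using extend_necklace_disjoint by (simp add: card_Un_disjoint)
qed

lemma extend_necklace_reaches_root:
  assumes "v < n + s"
  shows "(adj (extend_necklace E n L))\<^sup>*\<^sup>* v 0"
proof -
  have sub: "E \<subseteq> extend_necklace E n L" "shift_edges n L \<subseteq> extend_necklace E n L"
    by (auto simp: extend_necklace_def)
  have old: "(adj (extend_necklace E n L))\<^sup>*\<^sup>* u 0" if "u < n" for u
    using necklace that reachable_mono[OF sub(1)] by (simp add: open_necklace_def)
  show ?thesis
  proof (cases "v < n")
    case False
    then obtain j where j: "v = n + j" "j < s"
      using assms by (metis add_less_cancel_left le_iff_add not_less)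
    have "n \<ge> 2" using necklace by (simp add: open_necklace_def)
    then have "adj (extend_necklace E n L) n (n - 1)"
      by (simp add: adj_def extend_necklace_def insert_commute)
    moreover have "(adj (extend_necklace E n L))\<^sup>*\<^sup>* (n - 1) 0"
      using old \<open>n \<ge> 2\<close> by simp
    ultimately have "(adj (extend_necklace E n L))\<^sup>*\<^sup>* n 0"
      by (rule converse_rtranclp_into_rtranclp)
    moreover have "(adj (extend_necklace E n L))\<^sup>*\<^sup>* v n"
      using necklace_unit_reaches_first[OF unit j(2)] reachable_mono[OF sub(2)] j(1) by blast
    ultimately show ?thesis by (meson rtranclp_trans)
  qed (rule old)
qed

lemma extend_necklace_edges:
  "\<forall>e\<in>extend_necklace E n L. \<exists>u v. e = {u, v} \<and> u < v \<and> v < n + s"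
proof
  fix e assume "e \<in> extend_necklace E n L"
  then consider "e = {n - 1, n}" | "e \<in> E" | "e \<in> shift_edges n L"
    by (auto simp: extend_necklace_def)
  then show "\<exists>u v. e = {u, v} \<and> u < v \<and> v < n + s"
  proof cases
    case 1
    moreover have "n \<ge> 2" "s \<ge> 2"
      using necklace unit by (simp_all add: open_necklace_def necklace_unit_def)
    ultimately show ?thesis by (intro exI[of _ "n - 1"] exI[of _ n]) auto
  next
    case 2
    then show ?thesis using necklace by (fastforce simp: open_necklace_def)
  next
    case 3
    then obtain a b where "(a, b) \<in> set L" "e = {n + a, n + b}"
      by (auto simp: shift_edges_def)
    moreover from this(1) have "a < b" "b < s"
      using unit by (auto simp: necklace_unit_def)
    ultimately show ?thesis by (intro exI[of _ "n + a"] exI[of _ "n + b"]) auto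
  qed
qed

lemma deg_extend_necklace_ends:
  "deg (extend_necklace E n L) 0 = 2" "deg (extend_necklace E n L) (n + s - 1) = 1"
proof -
  have "n \<ge> 2" "deg E 0 = 2" using necklace by (simp_all add: open_necklace_def)
  have "s \<ge> 2" "unit_degree L (s - 1) = 1" using unit by (simp_all add: necklace_unit_def)
  have "deg (shift_edges n L) 0 = 0"
    using shift_edges_vertex[OF unit, of _ n 0] \<open>n \<ge> 2\<close> by (intro deg_eq_0) auto
  then show "deg (extend_necklace E n L) 0 = 2"
    using \<open>deg E 0 = 2\<close> \<open>n \<ge> 2\<close> by (simp add: deg_extend_necklace)
  have "deg E (n + (s - 1)) = 0"
    using open_necklace_vertex[OF necklace] by (meson deg_eq_0 not_add_less1)
  moreover have "deg (shift_edges n L) (n + (s - 1)) = 1"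
    using unit \<open>unit_degree L (s - 1) = 1\<close> deg_shift_edges[of L n "s - 1"]
    by (auto simp: necklace_unit_def)
  ultimately show "deg (extend_necklace E n L) (n + s - 1) = 1"
    using \<open>n \<ge> 2\<close> \<open>s \<ge> 2\<close> by (auto simp: deg_extend_necklace)
qed

lemma open_necklace_extend: "open_necklace (extend_necklace E n L) (n + s)"
proof -
  have "balanced_moments 3 (card E + 1) ((\<Sum>e\<in>E. edge_moments (closed_degree E n) e) + pair_moments 2 3)"
    and "balanced_moments 3 (length L + 1) (unit_moments L s + pair_moments 2 3)"
    using necklace unit by (simp_all add: open_necklace_def necklace_unit_def)
  from balanced_moments_add[OF this]
  have "balanced_moments 3 (card (extend_necklace E n L) + 1)
      ((\<Sum>e\<in>extend_necklace E n L. edge_moments (closed_degree (extend_necklace E n L) (n + s)) e)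
        + pair_moments 2 3)"
    by (simp add: moments_extend_necklace card_extend_necklace add_ac)
  moreover have "finite (extend_necklace E n L)"
    using extend_necklace_disjoint by (simp add: extend_necklace_def)
  moreover have "n \<ge> 2" using necklace by (simp add: open_necklace_def)
  ultimately show ?thesis
    using extend_necklace_edges deg_extend_necklace_ends extend_necklace_reaches_root
    by (simp add: open_necklace_def)
qed

lemma closing_edge_notin_extend_necklace: "{n + s - 1, 0} \<notin> extend_necklace E n L"
proof -
  have "n \<ge> 2" "s \<ge> 2"
    using necklace unit by (simp_all add: open_necklace_def necklace_unit_def)
  moreover have "{n + s - 1, 0} \<notin> E"
    using open_necklace_vertex[OF necklace, of "{n + s - 1, 0}" "n + s - 1"] \<open>s \<ge> 2\<close> by auto
  moreover have "{n + s - 1, 0} \<notin> shift_edges n L"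
    using shift_edges_vertex[OF unit, of "{n + s - 1, 0}" n 0] \<open>n \<ge> 2\<close> by auto
  ultimately show ?thesis
    by (auto simp: extend_necklace_def doubleton_eq_iff)
qed

end

lemma close_necklace:
  assumes necklace: "open_necklace E n" and fresh: "{n - 1, 0} \<notin> E"
  shows "simple_graph {0..<n} (insert {n - 1, 0} E)" "connected_graph {0..<n} (insert {n - 1, 0} E)"
    and "neutral (insert {n - 1, 0} E)"
proof -
  let ?C = "insert {n - 1, 0} E"
  have "n \<ge> 2" "finite E" "deg E 0 = 2" "deg E (n - 1) = 1"
    and edges: "\<forall>e\<in>E. \<exists>u v. e = {u, v} \<and> u < v \<and> v < n"
    and reach: "\<forall>v<n. (adj E)\<^sup>*\<^sup>* v 0"
    and balanced: "balanced_moments 3 (card E + 1)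
      ((\<Sum>e\<in>E. edge_moments (closed_degree E n) e) + pair_moments 2 3)"
    using necklace by (simp_all add: open_necklace_def)
  have deg: "(\<lambda>v. real (deg ?C v)) = closed_degree E n"
    using \<open>finite E\<close> fresh \<open>n \<ge> 2\<close> by (auto simp: deg_insert closed_degree_def)
  have "edge_moments (closed_degree E n) {n - 1, 0} = pair_moments 2 3"
    using \<open>n \<ge> 2\<close> \<open>deg E 0 = 2\<close> \<open>deg E (n - 1) = 1\<close>
    by (simp add: edge_moments_doubleton closed_degree_def)
  then have "balanced_moments 3 (card ?C) (\<Sum>e\<in>?C. edge_moments (closed_degree E n) e)"
    using balanced \<open>finite E\<close> fresh by (simp add: add.commute)
  then have "balanced_moments 3 (card ?C) (\<Sum>e\<in>?C. edge_moments (\<lambda>v. real (deg ?C v)) e)"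
    unfolding deg .
  then show "neutral ?C"
    using \<open>finite E\<close> by (intro neutral_if_balanced_moments) auto
  have "\<exists>u v. e = {u, v} \<and> u \<noteq> v \<and> u \<in> {0..<n} \<and> v \<in> {0..<n}" if "e \<in> ?C" for e
  proof (cases "e \<in> E")
    case True
    then obtain u v where "e = {u, v}" "u < v" "v < n" using edges by blast
    then show ?thesis by (intro exI[of _ u] exI[of _ v]) auto
  next
    case False
    then show ?thesis using that \<open>n \<ge> 2\<close> by (intro exI[of _ "n - 1"] exI[of _ 0]) auto
  qed
  then show "simple_graph {0..<n} ?C"
    by (simp add: simple_graph_def)
  have to_root: "(adj ?C)\<^sup>*\<^sup>* v 0" if "v < n" for v
    using reach that reachable_mono[of E ?C] by blast
  have "(adj ?C)\<^sup>*\<^sup>* u v" if "u < n" "v < n" for u v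
    using to_root[OF that(1)] reachable_sym[OF to_root[OF that(2)]] by (rule rtranclp_trans)
  then show "connected_graph {0..<n} ?C"
    using \<open>n \<ge> 2\<close> by (auto simp: connected_graph_def)
qed

definition unit7 :: "(nat \<times> nat) list" where
  "unit7 = [(0,1), (0,6), (1,2), (1,3), (1,4), (2,4), (2,5), (3,4), (3,5)]"

definition unit8 :: "(nat \<times> nat) list" where
  "unit8 = [(0,1), (0,7), (1,2), (1,3), (1,4), (2,3), (2,4), (3,5), (4,5), (5,6)]"

definition unit9 :: "(nat \<times> nat) list" where
  "unit9 = [(0,1), (0,8), (1,2), (1,3), (1,4), (2,4), (2,5), (2,6), (3,4), (3,7), (5,6)]"

lemma necklace_unit7: "necklace_unit unit7 7"
  unfolding necklace_unit_def unit_moments_def closed_unit_degree_def unit_degree_def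
    pair_moments_def balanced_moments_def
  by (simp add: unit7_def set_upt[symmetric] upt_rec power2_eq_square conj_disj_distribR ex_disj_distrib)

lemma necklace_unit8: "necklace_unit unit8 8"
  unfolding necklace_unit_def unit_moments_def closed_unit_degree_def unit_degree_def
    pair_moments_def balanced_moments_def
  by (simp add: unit8_def set_upt[symmetric] upt_rec power2_eq_square conj_disj_distribR ex_disj_distrib)

lemma necklace_unit9: "necklace_unit unit9 9"
  unfolding necklace_unit_def unit_moments_def closed_unit_degree_def unit_degree_def
    pair_moments_def balanced_moments_def
  by (simp add: unit9_def set_upt[symmetric] upt_rec power2_eq_square conj_disj_distribR ex_disj_distrib)

definition unit_of_order :: "nat \<Rightarrow> (nat \<times> nat) list" where
  "unit_of_order s = (if s = 7 then unit7 else if s = 8 then unit8 else unit9)"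

lemma necklace_unit_of_order: "s \<in> {7, 8, 9} \<Longrightarrow> necklace_unit (unit_of_order s) s"
  using necklace_unit7 necklace_unit8 necklace_unit9 by (auto simp: unit_of_order_def)

fun necklace :: "nat list \<Rightarrow> nat set set" where
  "necklace [] = shift_edges 0 unit7"
| "necklace (s # ss) = extend_necklace (necklace ss) (7 + sum_list ss) (unit_of_order s)"

lemma open_necklace_necklace: "set ss \<subseteq> {7, 8, 9} \<Longrightarrow> open_necklace (necklace ss) (7 + sum_list ss)"
proof (induction ss)
  case Nil
  show ?case using open_necklace_unit necklace_unit_of_order[of 7] by (simp add: unit_of_order_def)
next
  case (Cons s ss)
  then show ?case
    using open_necklace_extend[of "necklace ss" "7 + sum_list ss" "unit_of_order s" s] necklace_unit_of_order
    by (simp add: add_ac)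
qed

lemma closing_edge_notin_necklace:
  assumes "ss \<noteq> []" "set ss \<subseteq> {7, 8, 9}"
  shows "{7 + sum_list ss - 1, 0} \<notin> necklace ss"
proof -
  obtain s ss' where ss: "ss = s # ss'" using assms(1) by (cases ss) auto
  then have "open_necklace (necklace ss') (7 + sum_list ss')" "necklace_unit (unit_of_order s) s"
    using assms(2) open_necklace_necklace necklace_unit_of_order by auto
  from closing_edge_notin_extend_necklace[OF this] show ?thesis
    by (simp add: ss add_ac)
qed

lemma unit7_subset_necklace: "shift_edges 0 unit7 \<subseteq> necklace ss"
  by (induction ss) (auto simp: extend_necklace_def)

lemma exists_orders_sum:
  "21 \<le> (k :: nat) \<Longrightarrow> \<exists>ss. ss \<noteq> [] \<and> set ss \<subseteq> {7, 8, 9} \<and> sum_list ss = k"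
proof (induction k rule: less_induct)
  case (less k)
  show ?case
  proof (cases "k < 28")
    case True
    then have "k \<in> set [21..<28]" using less.prems by (subst set_upt) simp
    then show ?thesis
      by (auto simp: upt_rec
          intro!: exI[of _ "[7 + (k - 21) div 3, 7 + (k - 20) div 3, 7 + (k - 19) div 3]"])
  next
    case False
    then have "\<exists>ss. ss \<noteq> [] \<and> set ss \<subseteq> {7, 8, 9} \<and> sum_list ss = k - 7"
      using less.IH[of "k - 7"] by simp
    then obtain ss where "ss \<noteq> []" "set ss \<subseteq> {7, 8, 9}" "sum_list ss = k - 7"
      by blast
    then show ?thesis
      using False by (intro exI[of _ "7 # ss"]) auto
  qed
qed

theorem theorem3:
  fixes n :: nat
  assumes "n \<ge> 38"
  shows "\<exists>(V :: nat set) (E :: nat set set).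
           simple_graph V E \<and> connected_graph V E \<and> card V = n \<and>
           neutral E \<and> \<not> is_tree V E"
proof -
  have "\<exists>ss. ss \<noteq> [] \<and> set ss \<subseteq> {7, 8, 9} \<and> sum_list ss = n - 7"
    using exists_orders_sum[of "n - 7"] assms by simp
  then obtain ss where ss: "ss \<noteq> []" "set ss \<subseteq> {7, 8, 9}" and order: "7 + sum_list ss = n"
    using assms by auto
  let ?E = "insert {n - 1, 0} (necklace ss)"
  have "open_necklace (necklace ss) n" "{n - 1, 0} \<notin> necklace ss"
    using open_necklace_necklace[OF ss(2)] closing_edge_notin_necklace[OF ss] order by auto
  note closed = close_necklace[OF this]
  have "{1, 2} \<in> ?E" "{2, 4} \<in> ?E" "{1, 4} \<in> ?E"
    using unit7_subset_necklace[of ss] by (auto simp: shift_edges_def unit7_def)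
  then have "\<not> is_tree {0..<n} ?E"
    by (rule triangle_not_tree) simp
  then show ?thesis
    using closed by (intro exI[of _ "{0..<n}"] exI[of _ ?E]) simp
qed

end
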